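(* Let $S,T\subseteq\mathbb{Z}_{>0}$ be finite with $T\preceq S$ and $|T|>|S|$. Let $y\in T$ be the smallest element such that $T\setminus\{y\}\preceq S$. Then: (1) for every $j$ with $T(j)<y$, $(T\triangleleft S)(j)=T(j)$; (2) $y\notin T\triangleleft S$; (3) for every $S'\subseteq S$, $(T\setminus\{y\})\triangleleft S'=T\triangleleft S'$.
   Context: For a finite set $S\subseteq\mathbb{Z}_{>0}$, $S(i)$ denotes its $i$th smallest element. $T\preceq S$ means $|T|\ge|S|$ and $T(i)<S(i)$ for all $i\in[|S|]$. For finite $S,T$, $T\triangleleft S$ is computed by going through $S$ from largest to smallest; each $s$ picks the largest element of $T$ less than $s$ not yet picked (if one exists); $T\triangleleft S$ is the set of picked elements. *)

theory Defs
  imports Main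
begin

text \<open>S(i): the i-th smallest element of a finite set S, 1-indexed (meaningful for 1 <= i <= card S).\<close>
definition nth_el :: "nat set \<Rightarrow> nat \<Rightarrow> nat" where
  "nth_el S i = sorted_list_of_set S ! (i - 1)"

definition preceq :: "nat set \<Rightarrow> nat set \<Rightarrow> bool" where
  "preceq T S \<longleftrightarrow> card T \<ge> card S \<and> (\<forall>i\<in>{1..card S}. nth_el T i < nth_el S i)"

fun pick :: "nat list \<Rightarrow> nat set \<Rightarrow> nat set" where
  "pick [] A = {}"
| "pick (s # ss) A =
     (if \<exists>t\<in>A. t < s
      then (let t = Max {t\<in>A. t < s} in insert t (pick ss (A - {t})))
      else pick ss A)"

definition tri :: "nat set \<Rightarrow> nat set \<Rightarrow> nat set" where
  "tri T S = pick (rev (sorted_list_of_set S)) T"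

end

theory Submission
  imports Defs
begin

text \<open>Write \<open>rank X x\<close> for the number of elements of \<open>X\<close> below \<open>x\<close>. Then \<open>T \<preceq> S\<close> says
  that \<open>rank S s < rank T s\<close> for every \<open>s \<in> S\<close>, and the greedy matching \<open>T \<triangleleft> S\<close> picks
  \<open>t \<in> T\<close> exactly when some window \<open>(t, u]\<close> contains more elements of \<open>S\<close> than \<open>T\<close> has in
  \<open>(t, u)\<close>. Minimality of \<open>y\<close> means that every \<open>z \<in> T\<close> below \<open>y\<close> lies under a tight
  \<open>s \<in> S\<close>, i.e. \<open>rank T s = rank S s + 1\<close>. The window up to such an \<open>s\<close> shows that each
  \<open>t < y\<close> is picked; together with \<open>T - {y} \<preceq> S\<close> it also leaves every window above \<open>y\<close>
  short of elements of \<open>S\<close>, so \<open>y\<close> is picked by no \<open>S' \<subseteq> S\<close>, and removing an element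
  that is never picked does not change the greedy run.\<close>

definition rank :: "nat set \<Rightarrow> nat \<Rightarrow> nat" where
  "rank X x = card {a\<in>X. a < x}"

lemma rank_mono: "a \<le> b \<Longrightarrow> rank X a \<le> rank X b"
  unfolding rank_def by (rule card_mono) auto

lemma rank_Suc: "rank X (Suc x) = (if x \<in> X then Suc (rank X x) else rank X x)"
proof -
  have "{a\<in>X. a < Suc x} = (if x \<in> X then insert x {a\<in>X. a < x} else {a\<in>X. a < x})"
    by (auto simp: less_Suc_eq)
  then show ?thesis
    unfolding rank_def by simp
qed

lemma rank_Diff_singleton:
  assumes "z \<in> X"
  shows "rank (X - {z}) x = (if z < x then rank X x - 1 else rank X x)"
proof -
  have "{a\<in>X - {z}. a < x} = {a\<in>X. a < x} - {z}"
    by blast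
  with assms show ?thesis
    unfolding rank_def by (simp add: card_Diff_singleton_if)
qed

lemma card_window: "card {a\<in>X. t < a \<and> a < u} = rank X u - rank X (Suc t)"
proof (cases "t < u")
  case True
  have "{a\<in>X. a < u} = {a\<in>X. a < Suc t} \<union> {a\<in>X. t < a \<and> a < u}"
    using True by auto
  then have "rank X u = card ({a\<in>X. a < Suc t} \<union> {a\<in>X. t < a \<and> a < u})"
    unfolding rank_def by simp
  also have "\<dots> = rank X (Suc t) + card {a\<in>X. t < a \<and> a < u}"
    unfolding rank_def by (rule card_Un_disjoint) auto
  finally show ?thesis
    by simp
next
  case False
  then show ?thesis
    using rank_mono[of u "Suc t" X] by simp
qed

lemma card_window_le: "card {a\<in>X. t < a \<and> a \<le> u} = rank X (Suc u) - rank X (Suc t)"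
  using card_window[of X t "Suc u"] by (simp add: less_Suc_eq_le)

lemma rank_nth_sorted_list_of_set:
  assumes "finite X" "i < card X"
  shows "rank X (sorted_list_of_set X ! i) = i"
proof -
  define xs where "xs = sorted_list_of_set X"
  have xs: "sorted_wrt (<) xs" "distinct xs" "set xs = X" "length xs = card X"
    using assms(1) by (simp_all add: xs_def)
  have "{a\<in>X. a < xs ! i} = (!) xs ` {..<i}"
  proof
    show "{a\<in>X. a < xs ! i} \<subseteq> (!) xs ` {..<i}"
    proof
      fix a
      assume a: "a \<in> {a\<in>X. a < xs ! i}"
      then obtain j where j: "j < length xs" "a = xs ! j"
        using xs(3) by (auto simp: in_set_conv_nth)
      have "j < i"
      proof (rule ccontr)
        assume "\<not> j < i"
        then have "i < j \<or> i = j"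
          by linarith
        then have "xs ! i \<le> xs ! j"
          using sorted_wrt_nth_less[OF xs(1), of i j] j(1) by auto
        with a j(2) show False
          by simp
      qed
      with j show "a \<in> (!) xs ` {..<i}"
        by auto
    qed
    show "(!) xs ` {..<i} \<subseteq> {a\<in>X. a < xs ! i}"
      using xs assms(2) by (auto intro: sorted_wrt_nth_less)
  qed
  moreover have "inj_on ((!) xs) {..<i}"
    using xs(2,4) assms(2) by (auto simp: inj_on_def nth_eq_iff_index_eq)
  ultimately show ?thesis
    unfolding rank_def xs_def[symmetric] by (simp add: card_image)
qed

lemma nth_el_rank:
  assumes "finite X" "x \<in> X"
  shows "nth_el X (Suc (rank X x)) = x" and "rank X x < card X"
proof -
  have "x \<in> set (sorted_list_of_set X)"
    using assms by simp
  then obtain i where i: "i < card X" "sorted_list_of_set X ! i = x"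
    by (auto simp: in_set_conv_nth)
  moreover have "rank X x = i"
    using rank_nth_sorted_list_of_set[OF assms(1) i(1)] i(2) by simp
  ultimately show "nth_el X (Suc (rank X x)) = x" and "rank X x < card X"
    by (simp_all add: nth_el_def)
qed

lemma nth_el_mem_rank:
  assumes "finite X" "1 \<le> i" "i \<le> card X"
  shows "nth_el X i \<in> X" and "rank X (nth_el X i) = i - 1"
proof -
  have "i - 1 < length (sorted_list_of_set X)"
    using assms by simp
  then show "nth_el X i \<in> X"
    unfolding nth_el_def using assms(1) by (metis nth_mem set_sorted_list_of_set)
  show "rank X (nth_el X i) = i - 1"
    unfolding nth_el_def using rank_nth_sorted_list_of_set[OF assms(1), of "i - 1"] assms(2,3)
    by simp
qed

lemma nth_el_less_iff:
  assumes "finite X" "1 \<le> i" "i \<le> card X"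
  shows "nth_el X i < x \<longleftrightarrow> i \<le> rank X x"
proof
  assume "nth_el X i < x"
  then have "rank X (Suc (nth_el X i)) \<le> rank X x"
    by (intro rank_mono) simp
  then show "i \<le> rank X x"
    using nth_el_mem_rank[OF assms] assms(2) by (simp add: rank_Suc)
next
  assume "i \<le> rank X x"
  show "nth_el X i < x"
  proof (rule ccontr)
    assume "\<not> nth_el X i < x"
    then have "rank X x \<le> rank X (nth_el X i)"
      by (intro rank_mono) simp
    with \<open>i \<le> rank X x\<close> show False
      using nth_el_mem_rank[OF assms] assms(2) by simp
  qed
qed

lemma preceq_iff_rank_less:
  assumes "finite X" "finite S"
  shows "preceq X S \<longleftrightarrow> card S \<le> card X \<and> (\<forall>s\<in>S. rank S s < rank X s)"
proof (cases "card S \<le> card X")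
  case True
  have "(\<forall>i\<in>{1..card S}. nth_el X i < nth_el S i) \<longleftrightarrow> (\<forall>s\<in>S. rank S s < rank X s)"
  proof
    assume below: "\<forall>i\<in>{1..card S}. nth_el X i < nth_el S i"
    show "\<forall>s\<in>S. rank S s < rank X s"
    proof
      fix s
      assume "s \<in> S"
      then have "Suc (rank S s) \<le> card S" and at_s: "nth_el S (Suc (rank S s)) = s"
        using nth_el_rank[OF assms(2)] by (auto simp: Suc_le_eq)
      have "nth_el X (Suc (rank S s)) < nth_el S (Suc (rank S s))"
        using below \<open>Suc (rank S s) \<le> card S\<close> by simp
      then have "nth_el X (Suc (rank S s)) < s"
        by (simp only: at_s)
      with \<open>Suc (rank S s) \<le> card S\<close> True show "rank S s < rank X s"
        using nth_el_less_iff[OF assms(1), of "Suc (rank S s)" s] by simp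
    qed
  next
    assume less: "\<forall>s\<in>S. rank S s < rank X s"
    show "\<forall>i\<in>{1..card S}. nth_el X i < nth_el S i"
    proof
      fix i
      assume i: "i \<in> {1..card S}"
      then have "i \<le> rank X (nth_el S i)"
        using less nth_el_mem_rank[OF assms(2)] by fastforce
      with i True show "nth_el X i < nth_el S i"
        using nth_el_less_iff[OF assms(1)] by auto
    qed
  qed
  with True show ?thesis
    unfolding preceq_def by simp
qed (simp add: preceq_def)

lemma nth_el_eq_if_agree_below:
  assumes "finite P" "finite T" and agree: "{a\<in>P. a < b} = {a\<in>T. a < b}"
    and j: "1 \<le> j" "j \<le> card T" "nth_el T j < b"
  shows "j \<le> card P \<and> nth_el P j = nth_el T j"
proof -
  define x where "x = nth_el T j"
  have "x \<in> T" and rank_T: "rank T x = j - 1" and "x < b"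
    using nth_el_mem_rank[OF assms(2) j(1,2)] j(3) by (simp_all add: x_def)
  then have "x \<in> P"
    using agree by blast
  have "{a\<in>P. a < x} = {a\<in>{a\<in>P. a < b}. a < x}"
    using \<open>x < b\<close> by auto
  also have "\<dots> = {a\<in>T. a < x}"
    unfolding agree using \<open>x < b\<close> by auto
  finally have "rank P x = j - 1"
    using rank_T unfolding rank_def by simp
  then show ?thesis
    using nth_el_rank[OF assms(1) \<open>x \<in> P\<close>] j(1) by (simp add: x_def)
qed

lemma pick_Cons_cases:
  obtains "\<forall>a\<in>A. s \<le> a" "pick (s # ss) A = pick ss A"
  | t where "t \<in> A" "t < s" "\<forall>a\<in>A. a < s \<longrightarrow> a \<le> t"
      "pick (s # ss) A = insert t (pick ss (A - {t}))"
proof (cases "\<exists>a\<in>A. a < s")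
  case True
  define t where "t = Max {a\<in>A. a < s}"
  have "t \<in> {a\<in>A. a < s}"
    unfolding t_def using True by (intro Max_in) auto
  moreover have "\<forall>a\<in>A. a < s \<longrightarrow> a \<le> t"
    unfolding t_def by simp
  ultimately show thesis
    using True that(2) by (auto simp: Let_def t_def[symmetric])
next
  case False
  then show thesis
    by (intro that(1)) (auto simp: not_less)
qed

declare pick.simps(2) [simp del]

lemma pick_subset: "pick ss A \<subseteq> A"
proof (induction ss arbitrary: A)
  case (Cons s ss)
  show ?case
    by (cases rule: pick_Cons_cases[of A s ss]) (use Cons.IH in auto)
qed simp

lemma pick_Diff_unpicked: "y \<notin> pick ss A \<Longrightarrow> pick ss (A - {y}) = pick ss A"
proof (induction ss arbitrary: A)
  case (Cons s ss)
  show ?case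
  proof (cases rule: pick_Cons_cases[of A s ss])
    case 1
    moreover have "\<forall>a\<in>A - {y}. s \<le> a"
      using 1 by blast
    ultimately show ?thesis
      using Cons by (cases rule: pick_Cons_cases[of "A - {y}" s ss]) auto
  next
    case (2 t)
    note t = 2
    have "y \<noteq> t" and y_unpicked: "y \<notin> pick ss (A - {t})"
      using Cons.prems t(4) by simp_all
    have "pick (s # ss) (A - {y}) = insert t (pick ss (A - {y} - {t}))"
    proof (cases rule: pick_Cons_cases[of "A - {y}" s ss])
      case 1
      then have "s \<le> t"
        using t(1) \<open>y \<noteq> t\<close> by blast
      with t(2) show ?thesis
        by simp
    next
      case (2 t')
      have "t \<le> t'"
        using 2(3) t(1,2) \<open>y \<noteq> t\<close> by simp
      moreover have "t' \<le> t"
        using 2(1,2) t(3) by simp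
      ultimately show ?thesis
        using 2(4) by simp
    qed
    also have "A - {y} - {t} = A - {t} - {y}"
      by blast
    finally show ?thesis
      using t(4) Cons.IH[OF y_unpicked] by simp
  qed
qed simp

lemma window_excess_remove_pick:
  fixes s t t0 u :: nat
  assumes below_s: "\<forall>x\<in>set ss. x < s" and "t0 \<in> A" "t0 < s" "t < t0"
    and excess: "card {a\<in>A. t < a \<and> a < u} < card {x\<in>set (s # ss). t < x \<and> x \<le> u}"
  shows "card {a\<in>A - {t0}. t < a \<and> a < u} < card {x\<in>set ss. t < x \<and> x \<le> u}"
proof -
  let ?W = "\<lambda>A. {a\<in>A. t < a \<and> a < u}" and ?V = "\<lambda>ss. {x\<in>set ss. t < x \<and> x \<le> u}"
  \<comment> \<open>the count on the right can only drop when the count on the left drops as well\<close>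
  have "s \<in> ?V (s # ss) \<Longrightarrow> t0 \<in> ?W A"
    using assms(2-4) by auto
  moreover have "?W (A - {t0}) = ?W A - {t0}" and "?V ss = ?V (s # ss) - {s}"
    using below_s by auto
  then have "card (?W (A - {t0})) = (if t0 \<in> ?W A then card (?W A) - 1 else card (?W A))"
    and "card (?V ss) = (if s \<in> ?V (s # ss) then card (?V (s # ss)) - 1 else card (?V (s # ss)))"
    by (simp_all only: card_Diff_singleton_if)
  moreover have "t0 \<in> ?W A \<Longrightarrow> card (?W A) \<noteq> 0"
    by auto
  ultimately show ?thesis
    using excess
    by (cases "t0 \<in> ?W A"; cases "s \<in> ?V (s # ss)"; simp only: if_True if_False; linarith)
qed

lemma window_excess_restore_pick:
  fixes s t t0 u :: nat
  assumes below_s: "\<forall>x\<in>set ss. x < s" and "t0 < s" and greatest: "\<forall>a\<in>A. a < s \<longrightarrow> a \<le> t0"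
    and excess: "card {a\<in>A - {t0}. t < a \<and> a < u} < card {x\<in>set ss. t < x \<and> x \<le> u}"
  shows "\<exists>u'. card {a\<in>A. t < a \<and> a < u'} < card {x\<in>set (s # ss). t < x \<and> x \<le> u'}"
proof -
  let ?W = "\<lambda>A u. {a\<in>A. t < a \<and> a < u}" and ?V = "\<lambda>ss u. {x\<in>set ss. t < x \<and> x \<le> u}"
  have W_Diff: "?W (A - {t0}) u = ?W A u - {t0}"
    by blast
  have W_Suc: "t0 \<in> ?W A u \<Longrightarrow> card (?W A u) = Suc (card (?W (A - {t0}) u))"
    unfolding W_Diff by (rule card_Suc_Diff1[symmetric]) auto
  consider "t0 \<notin> ?W A u" | "t0 \<in> ?W A u" "s \<le> u" | "t0 \<in> ?W A u" "u < s"
    by linarith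
  then show ?thesis
  proof cases
    case 1
    then have "card (?W A u) = card (?W (A - {t0}) u)"
      by (intro arg_cong[where f = card]) blast
    moreover have "card (?V ss u) \<le> card (?V (s # ss) u)"
      by (rule card_mono) auto
    ultimately show ?thesis
      using excess by (intro exI[of _ u]) linarith
  next
    case 2
    then have "card (?W A u) = Suc (card (?W (A - {t0}) u))"
      by (intro W_Suc)
    moreover have "?V (s # ss) u = insert s (?V ss u)"
      using 2 \<open>t0 < s\<close> by auto
    then have "card (?V (s # ss) u) = Suc (card (?V ss u))"
      using below_s by (auto simp: card_insert_if)
    ultimately show ?thesis
      using excess by (intro exI[of _ u]) linarith
  next
    case 3
    \<comment> \<open>widen the window to \<open>(t, s]\<close>: no element of \<open>A\<close> lies in \<open>[u, s)\<close>\<close>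
    then have "card (?W A u) = Suc (card (?W (A - {t0}) u))"
      by (intro W_Suc)
    moreover have "card (?W A s) = card (?W A u)"
      using 3 greatest by (intro arg_cong[where f = card]) fastforce
    moreover have "card (insert s (?V ss u)) \<le> card (?V (s # ss) s)"
      using 3 \<open>t0 < s\<close> below_s by (intro card_mono) auto
    then have "Suc (card (?V ss u)) \<le> card (?V (s # ss) s)"
      using below_s by (auto simp: card_insert_if)
    ultimately show ?thesis
      using excess by (intro exI[of _ s]) linarith
  qed
qed

lemma pick_memI:
  assumes "sorted_wrt (>) ss" "t \<in> A"
    and "card {a\<in>A. t < a \<and> a < u} < card {x\<in>set ss. t < x \<and> x \<le> u}"
  shows "t \<in> pick ss A"
  using assms
proof (induction ss arbitrary: A)
  case (Cons s ss)
  have sorted: "sorted_wrt (>) ss" and below_s: "\<forall>x\<in>set ss. x < s"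
    using Cons.prems(1) by auto
  show ?case
  proof (cases rule: pick_Cons_cases[of A s ss])
    case 1
    then have "{x\<in>set (s # ss). t < x \<and> x \<le> u} = {x\<in>set ss. t < x \<and> x \<le> u}"
      using Cons.prems(2) by auto
    with 1 Cons.IH[OF sorted Cons.prems(2)] Cons.prems(3) show ?thesis
      by simp
  next
    case (2 t0)
    show ?thesis
    proof (cases "t0 = t")
      case False
      have "t < t0"
      proof (rule ccontr)
        assume "\<not> t < t0"
        with False 2(3) Cons.prems(2) have "s \<le> t"
          by (meson linorder_neqE_nat not_le)
        then have "{x\<in>set (s # ss). t < x \<and> x \<le> u} = {}"
          using below_s by auto
        with Cons.prems(3) show False
          by (metis card.empty not_less0)
      qed
      from below_s 2(1,2) this Cons.prems(3)
      have "card {a\<in>A - {t0}. t < a \<and> a < u} < card {x\<in>set ss. t < x \<and> x \<le> u}"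
        by (rule window_excess_remove_pick)
      moreover have "t \<in> A - {t0}"
        using Cons.prems(2) False by simp
      ultimately show ?thesis
        using 2(4) Cons.IH[OF sorted] by simp
    qed (use 2(4) in simp)
  qed
qed simp

lemma pick_memD:
  assumes "sorted_wrt (>) ss" "t \<in> pick ss A"
  shows "\<exists>u. card {a\<in>A. t < a \<and> a < u} < card {x\<in>set ss. t < x \<and> x \<le> u}"
  using assms
proof (induction ss arbitrary: A)
  case (Cons s ss)
  have sorted: "sorted_wrt (>) ss" and below_s: "\<forall>x\<in>set ss. x < s"
    using Cons.prems(1) by auto
  show ?case
  proof (cases rule: pick_Cons_cases[of A s ss])
    case 1
    then obtain u where "card {a\<in>A. t < a \<and> a < u} < card {x\<in>set ss. t < x \<and> x \<le> u}"
      using Cons.IH[OF sorted] Cons.prems(2) by blast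
    moreover have "card {x\<in>set ss. t < x \<and> x \<le> u} \<le> card {x\<in>set (s # ss). t < x \<and> x \<le> u}"
      by (rule card_mono) auto
    ultimately show ?thesis
      by (meson order_less_le_trans)
  next
    case (2 t0)
    show ?thesis
    proof (cases "t0 = t")
      case True
      then have "{a\<in>A. t < a \<and> a < s} = {}" and "s \<in> {x\<in>set (s # ss). t < x \<and> x \<le> s}"
        using 2 by auto
      then have "card {a\<in>A. t < a \<and> a < s} = 0" and "0 < card {x\<in>set (s # ss). t < x \<and> x \<le> s}"
        by (auto simp only: card.empty card_gt_0_iff)
      then show ?thesis
        by (intro exI[of _ s]) linarith
    next
      case False
      then have "t \<in> pick ss (A - {t0})"
        using Cons.prems(2) 2(4) by simp
      then obtain u where "card {a\<in>A - {t0}. t < a \<and> a < u} < card {x\<in>set ss. t < x \<and> x \<le> u}"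
        using Cons.IH[OF sorted] by blast
      with below_s 2(2,3) show ?thesis
        by (rule window_excess_restore_pick)
    qed
  qed
qed simp

lemma tri_subset: "tri T S \<subseteq> T"
  unfolding tri_def by (rule pick_subset)

lemma tri_Diff_unpicked: "y \<notin> tri T S \<Longrightarrow> tri (T - {y}) S = tri T S"
  unfolding tri_def by (rule pick_Diff_unpicked)

lemma tri_mem_iff:
  assumes "finite S" "t \<in> T"
  shows "t \<in> tri T S \<longleftrightarrow> (\<exists>u. card {a\<in>T. t < a \<and> a < u} < card {s\<in>S. t < s \<and> s \<le> u})"
proof -
  define ss where "ss = rev (sorted_list_of_set S)"
  have "sorted_wrt (>) ss" and set_ss: "set ss = S"
    using assms(1) by (simp_all add: ss_def sorted_wrt_rev)
  then show ?thesis
    unfolding tri_def ss_def[symmetric]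
    using pick_memI[of ss t T, unfolded set_ss] pick_memD[of ss t T, unfolded set_ss] assms(2)
    by blast
qed

lemma tri_mono:
  assumes "finite S" "S' \<subseteq> S"
  shows "tri T S' \<subseteq> tri T S"
proof
  fix t
  assume picked: "t \<in> tri T S'"
  then have "t \<in> T"
    using tri_subset by blast
  moreover have "finite S'"
    using assms finite_subset by blast
  ultimately obtain u where "card {a\<in>T. t < a \<and> a < u} < card {s\<in>S'. t < s \<and> s \<le> u}"
    using picked tri_mem_iff by blast
  moreover have "card {s\<in>S'. t < s \<and> s \<le> u} \<le> card {s\<in>S. t < s \<and> s \<le> u}"
    using assms by (intro card_mono) auto
  ultimately show "t \<in> tri T S"
    using tri_mem_iff[OF assms(1) \<open>t \<in> T\<close>] by (meson order_less_le_trans)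
qed

lemma tight_of_not_preceq_Diff:
  assumes "finite S" "finite T" "preceq T S" "card S < card T"
    and "z \<in> T" "\<not> preceq (T - {z}) S"
  obtains s where "s \<in> S" "z < s" "rank T s = Suc (rank S s)"
proof -
  have "card S \<le> card (T - {z})"
    using assms(4,5) by simp
  then obtain s where "s \<in> S" "\<not> rank S s < rank (T - {z}) s"
    using assms(1,2,6) preceq_iff_rank_less[of "T - {z}" S] by auto
  moreover have "rank S s < rank T s"
    using assms(1-3) \<open>s \<in> S\<close> preceq_iff_rank_less by blast
  ultimately show thesis
    using that rank_Diff_singleton[OF assms(5)] by (simp split: if_splits)
qed

lemma rank_Suc_add_le:
  assumes less: "\<forall>s\<in>S. a \<le> s \<longrightarrow> rank S s + k < rank T s"
    and s: "s \<in> S" "a \<le> s" "s \<le> u"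
  shows "rank S (Suc u) + k \<le> rank T u"
proof -
  obtain m where m: "m \<in> S" "a \<le> m" "m \<le> u"
    and greatest: "\<forall>s'. s' \<in> S \<and> a \<le> s' \<and> s' \<le> u \<longrightarrow> s' \<le> m"
    using Nat.ex_has_greatest_nat[of "\<lambda>s'. s' \<in> S \<and> a \<le> s' \<and> s' \<le> u" s u] s by blast
  have "rank S (Suc u) = rank S (Suc m)"
    unfolding rank_def using m greatest
    by (intro arg_cong[where f = card]) (auto simp: less_Suc_eq_le)
  also have "\<dots> = Suc (rank S m)"
    using m(1) by (simp add: rank_Suc)
  finally show ?thesis
    using less m rank_mono[of m u T] by fastforce
qed

lemma rank_Suc_le_of_rank_less:
  assumes "\<forall>s\<in>S. rank S s < rank T s"
  shows "rank S (Suc x) \<le> rank T x"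
proof (cases "\<exists>s\<in>S. s \<le> x")
  case True
  then show ?thesis
    using rank_Suc_add_le[of S 0 0 T] assms by fastforce
next
  case False
  then have "{a\<in>S. a < Suc x} = {}"
    by auto
  then have "rank S (Suc x) = 0"
    unfolding rank_def by (simp only: card.empty)
  then show ?thesis
    by simp
qed

lemma rank_le_rank_Suc_if_tight_below:
  assumes above: "\<forall>s\<in>S. y < s \<longrightarrow> Suc (rank S s) < rank T s"
    and tight: "\<forall>z\<in>T. z < y \<longrightarrow> (\<exists>s\<in>S. z < s \<and> rank T s = Suc (rank S s))"
  shows "rank T y \<le> rank S (Suc y)"
proof (cases "\<exists>z\<in>T. z < y")
  case True
  then obtain z where z: "z \<in> T" "z < y" and greatest: "\<forall>a. a \<in> T \<and> a < y \<longrightarrow> a \<le> z"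
    using Nat.ex_has_greatest_nat[of "\<lambda>a. a \<in> T \<and> a < y" _ y] by (metis less_imp_le_nat)
  then obtain s where s: "s \<in> S" "z < s" "rank T s = Suc (rank S s)"
    using tight by blast
  have "s \<le> y"
  proof (rule ccontr)
    assume "\<not> s \<le> y"
    with above s show False
      by auto
  qed
  have "rank T y \<le> rank T s"
    unfolding rank_def using greatest s(2) by (intro card_mono) auto
  also have "\<dots> = rank S (Suc s)"
    using s by (simp add: rank_Suc)
  also have "\<dots> \<le> rank S (Suc y)"
    using \<open>s \<le> y\<close> by (simp add: rank_mono)
  finally show ?thesis .
next
  case False
  then have "{a\<in>T. a < y} = {}"
    by auto
  then have "rank T y = 0"
    unfolding rank_def by (simp only: card.empty)
  then show ?thesis
    by simp
qed

lemma window_above_deficient: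
  assumes "y \<in> T"
    and above: "\<forall>s\<in>S. y < s \<longrightarrow> Suc (rank S s) < rank T s"
    and at_y: "rank T y \<le> rank S (Suc y)"
  shows "card {s\<in>S. y < s \<and> s \<le> u} \<le> card {a\<in>T. y < a \<and> a < u}"
proof (cases "\<exists>s\<in>S. y < s \<and> s \<le> u")
  case True
  then obtain s where "s \<in> S" "Suc y \<le> s" "s \<le> u"
    by (auto simp: Suc_le_eq)
  then have "rank S (Suc u) + 1 \<le> rank T u"
    using above by (intro rank_Suc_add_le[of S "Suc y" 1 T]) (auto simp: Suc_le_eq)
  moreover have "rank S (Suc y) \<le> rank S (Suc u)"
    using \<open>Suc y \<le> s\<close> \<open>s \<le> u\<close> by (simp add: rank_mono)
  moreover have "card {a\<in>T. y < a \<and> a < u} = rank T u - Suc (rank T y)"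
    using \<open>y \<in> T\<close> by (simp add: card_window rank_Suc[of T y])
  ultimately show ?thesis
    using at_y card_window_le[of S y u] by linarith
next
  case False
  then have "{s\<in>S. y < s \<and> s \<le> u} = {}"
    by auto
  then show ?thesis
    by (simp only: card.empty le0)
qed

lemma window_below_excess:
  assumes "t \<in> T" "s \<in> S" "t < s" and tight: "rank T s = Suc (rank S s)"
    and below: "rank S (Suc t) \<le> rank T t"
  shows "card {a\<in>T. t < a \<and> a < s} < card {x\<in>S. t < x \<and> x \<le> s}"
proof -
  have "Suc (rank T t) \<le> rank T s"
    using \<open>t \<in> T\<close> \<open>t < s\<close> rank_mono[of "Suc t" s T] by (simp add: rank_Suc[of T t])
  moreover have "card {a\<in>T. t < a \<and> a < s} = rank T s - Suc (rank T t)"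
    using \<open>t \<in> T\<close> by (simp add: card_window rank_Suc[of T t])
  moreover have "card {x\<in>S. t < x \<and> x \<le> s} = Suc (rank S s) - rank S (Suc t)"
    using \<open>s \<in> S\<close> by (simp add: card_window_le rank_Suc[of S s])
  ultimately show ?thesis
    using tight below by linarith
qed

theorem lemma4p17:
  fixes S T :: "nat set" and y :: nat
  assumes "finite S" and "finite T"
    and "0 \<notin> S" and "0 \<notin> T"
    and "preceq T S" and "card T > card S"
    and "y \<in> T" and "preceq (T - {y}) S"
    and "\<forall>z\<in>T. preceq (T - {z}) S \<longrightarrow> y \<le> z"
  shows "(\<forall>j\<in>{1..card T}. nth_el T j < y \<longrightarrow>
            j \<le> card (tri T S) \<and> nth_el (tri T S) j = nth_el T j)
         \<and> y \<notin> tri T S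
         \<and> (\<forall>S'. S' \<subseteq> S \<longrightarrow> tri (T - {y}) S' = tri T S')"
proof -
  have less: "\<forall>s\<in>S. rank S s < rank T s"
    using assms(1,2,5) preceq_iff_rank_less by blast
  have above: "\<forall>s\<in>S. y < s \<longrightarrow> Suc (rank S s) < rank T s"
    using assms(1,2,7,8) preceq_iff_rank_less[of "T - {y}" S] rank_Diff_singleton[of y T] by auto
  have tight: "\<forall>z\<in>T. z < y \<longrightarrow> (\<exists>s\<in>S. z < s \<and> rank T s = Suc (rank S s))"
    using assms(1,2,5,6,9) tight_of_not_preceq_Diff[of S T] by (metis not_le)
  have y_unpicked: "y \<notin> tri T S'" if "S' \<subseteq> S" for S'
    using tri_mem_iff[OF assms(1,7)] window_above_deficient[OF assms(7) above
        rank_le_rank_Suc_if_tight_below[OF above tight]] tri_mono[OF assms(1) that]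
    by (meson not_le subsetD)
  have "t \<in> tri T S" if "t \<in> T" "t < y" for t
    using tight that window_below_excess rank_Suc_le_of_rank_less[OF less] tri_mem_iff[OF assms(1)]
    by meson
  then have "{a\<in>tri T S. a < y} = {a\<in>T. a < y}"
    using tri_subset by blast
  moreover have "finite (tri T S)"
    using assms(2) tri_subset finite_subset by blast
  ultimately show ?thesis
    using nth_el_eq_if_agree_below[OF _ assms(2)] y_unpicked tri_Diff_unpicked by auto
qed

end
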